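(* Let $b\ge0$, $c\ge0$, $1\le a\le c+1$, and $f\in\mathbb{F}_q[x_1,\dots,x_c]$. If $\delta_{a;b}(f)$ is a polynomial, then $\delta_{a';b}(f)$ is a polynomial for every integer $1\le a'<a$.
   Context: $q$ is a power of a prime. Delta operators: for integers $b\ge0$, $c\ge0$, $1\le a\le c+1$, $\delta_{a;b}:\mathbb{F}_q(x_1,\dots,x_c)\to\mathbb{F}_q(x_1,\dots,x_{c+1})$ sends $f$ to $N/L(x_1,\dots,x_a)$, where $N$ is the $a\times a$ determinant whose $t$-th row is $(x_1^{q^{t-1}},\dots,x_a^{q^{t-1}})$ for $t=1,\dots,a-1$ and whose last row is $(x_1^{q^b}f(\hat x_1),\dots,x_a^{q^b}f(\hat x_a))$, with $f(\hat x_i)=f(x_1,\dots,x_{i-1},x_{i+1},\dots,x_{c+1})$, and $L(x_1,\dots,x_a)=\det(x_j^{q^{t-1}})_{1\le t,j\le a}$. *)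

theory Defs
  imports "HOL-Library.Poly_Mapping" "HOL-Computational_Algebra.Fraction_Field"
          "Jordan_Normal_Form.Determinant"
begin

text \<open>Multivariate polynomials over a field 'a in the variables x_1, x_2, ...
  represented as (nat =>0 nat) =>0 'a; variable x_(j+1) is index j (0-based).\<close>

type_synonym 'a mpoly = "(nat \<Rightarrow>\<^sub>0 nat) \<Rightarrow>\<^sub>0 'a"

definition mvar :: "nat \<Rightarrow> 'a::comm_ring_1 mpoly" where
  "mvar j = Poly_Mapping.single (Poly_Mapping.single j 1) 1"

definition mconst :: "'a::comm_ring_1 \<Rightarrow> 'a mpoly" where
  "mconst c = Poly_Mapping.single 0 c"

definition mvars :: "'a::comm_ring_1 mpoly \<Rightarrow> nat set" where
  "mvars p = \<Union> (Poly_Mapping.keys ` Poly_Mapping.keys p)"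

definition msubst :: "(nat \<Rightarrow> 'a::comm_ring_1 mpoly) \<Rightarrow> 'a mpoly \<Rightarrow> 'a mpoly" where
  "msubst \<sigma> p = (\<Sum>m\<in>Poly_Mapping.keys p.
      mconst (Poly_Mapping.lookup p m) *
      (\<Prod>v\<in>Poly_Mapping.keys m. \<sigma> v ^ Poly_Mapping.lookup m v))"

text \<open>f(hat x_i) for column index k = i-1 (0-based): x_1..x_(i-1) stay,
  the remaining variables shift by one.\<close>
definition omit_var :: "nat \<Rightarrow> 'a::comm_ring_1 mpoly \<Rightarrow> 'a mpoly" where
  "omit_var k f = msubst (\<lambda>j. mvar (if j < k then j else Suc j)) f"

definition mooreL :: "nat \<Rightarrow> 'a::{finite,field} mpoly" where
  "mooreL a = det (mat a a (\<lambda>(r, k). mvar k ^ (card (UNIV :: 'a set) ^ r)))"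

definition deltaN :: "nat \<Rightarrow> nat \<Rightarrow> 'a::{finite,field} mpoly \<Rightarrow> 'a mpoly" where
  "deltaN a b f = det (mat a a (\<lambda>(r, k).
      if r < a - 1 then mvar k ^ (card (UNIV :: 'a set) ^ r)
      else mvar k ^ (card (UNIV :: 'a set) ^ b) * omit_var k f))"

definition delta :: "nat \<Rightarrow> nat \<Rightarrow> 'a::{finite,field} mpoly \<Rightarrow> 'a mpoly fract" where
  "delta a b f = Fract (deltaN a b f) (mooreL a)"

definition is_poly_in :: "nat \<Rightarrow> 'a::{finite,field} mpoly fract \<Rightarrow> bool" where
  "is_poly_in n r \<longleftrightarrow> (\<exists>p. mvars p \<subseteq> {..<n} \<and> r = Fract p 1)"

end

theory Submission
  imports Defs "HOL-Computational_Algebra.Polynomial" "HOL-Library.Cardinality"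
begin

text \<open>Over \<open>\<bbbF>\<^sub>q\<close> the Moore determinant is a product of pairwise non-associate linear forms,
  \<open>L = \<Prod>\<^sub>j\<^sub><\<^sub>a \<Prod>\<^sub>c (x\<^sub>j\<^sub>+\<^sub>1 - c\<^sub>1 x\<^sub>1 - \<dots> - c\<^sub>j x\<^sub>j)\<close> with \<open>c\<close> ranging over \<open>\<bbbF>\<^sub>q\<^sup>j\<close>, so \<open>L\<close> divides the
  numerator \<open>N\<close> iff \<open>N\<close> vanishes under every substitution \<open>x\<^sub>j\<^sub>+\<^sub>1 := c\<^sub>1 x\<^sub>1 + \<dots> + c\<^sub>j x\<^sub>j\<close>.
  Since Frobenius is additive, such a substitution turns column \<open>j + 1\<close> of \<open>N\<close> into a combination
  of the earlier columns plus a single entry \<open>D\<^sub>j(c)\<close> in the last row, whose cofactor is a nonzero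
  Moore determinant in the remaining variables. Hence \<open>L | N\<close> iff \<open>D\<^sub>j(c) = 0\<close> for all \<open>j < a\<close>
  and all \<open>c\<close>; as \<open>D\<^sub>j(c)\<close> does not depend on \<open>a\<close>, this passes from \<open>a\<close> to every \<open>a' < a\<close>.
  Finally, the quotient \<open>N / L\<close> involves only the variables of \<open>N\<close> and \<open>L\<close>.\<close>


section \<open>Evaluation homomorphisms\<close>

definition monom_eval :: "(nat \<Rightarrow> 'b::comm_ring_1) \<Rightarrow> (nat \<Rightarrow>\<^sub>0 nat) \<Rightarrow> 'b" where
  "monom_eval \<sigma> m = (\<Prod>v\<in>Poly_Mapping.keys m. \<sigma> v ^ Poly_Mapping.lookup m v)"

definition mpoly_eval ::
    "('a::comm_ring_1 \<Rightarrow> 'b::comm_ring_1) \<Rightarrow> (nat \<Rightarrow> 'b) \<Rightarrow> 'a mpoly \<Rightarrow> 'b" where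
  "mpoly_eval \<kappa> \<sigma> p =
     (\<Sum>m\<in>Poly_Mapping.keys p. \<kappa> (Poly_Mapping.lookup p m) * monom_eval \<sigma> m)"

lemma monom_eval_superset:
  assumes "finite S" "Poly_Mapping.keys m \<subseteq> S"
  shows "monom_eval \<sigma> m = (\<Prod>v\<in>S. \<sigma> v ^ Poly_Mapping.lookup m v)"
  unfolding monom_eval_def
  by (rule prod.mono_neutral_left) (use assms in \<open>auto simp: in_keys_iff\<close>)

lemma monom_eval_0 [simp]: "monom_eval \<sigma> 0 = 1"
  by (simp add: monom_eval_def)

lemma monom_eval_add: "monom_eval \<sigma> (m + m') = monom_eval \<sigma> m * monom_eval \<sigma> m'"
proof -
  let ?S = "Poly_Mapping.keys m \<union> Poly_Mapping.keys m'"
  have S: "finite ?S" by simp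
  have "monom_eval \<sigma> (m + m') = (\<Prod>v\<in>?S. \<sigma> v ^ Poly_Mapping.lookup (m + m') v)"
    by (rule monom_eval_superset[OF S keys_add])
  also have "\<dots> = (\<Prod>v\<in>?S. \<sigma> v ^ Poly_Mapping.lookup m v) * (\<Prod>v\<in>?S. \<sigma> v ^ Poly_Mapping.lookup m' v)"
    by (simp add: lookup_add power_add prod.distrib)
  also have "\<dots> = monom_eval \<sigma> m * monom_eval \<sigma> m'"
    by (simp add: monom_eval_superset[OF S])
  finally show ?thesis .
qed

lemma monom_eval_single: "monom_eval \<sigma> (Poly_Mapping.single v k) = \<sigma> v ^ k"
  by (cases "k = 0") (auto simp: monom_eval_def)

lemma mpoly_eval_superset:
  assumes "finite S" "Poly_Mapping.keys p \<subseteq> S" "\<kappa> 0 = 0"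
  shows "mpoly_eval \<kappa> \<sigma> p = (\<Sum>m\<in>S. \<kappa> (Poly_Mapping.lookup p m) * monom_eval \<sigma> m)"
  unfolding mpoly_eval_def
  by (rule sum.mono_neutral_left) (use assms in \<open>auto simp: in_keys_iff\<close>)

lemma mpoly_eval_0 [simp]: "mpoly_eval \<kappa> \<sigma> 0 = 0"
  by (simp add: mpoly_eval_def)

lemma mpoly_eval_add:
  assumes "comm_ring_hom \<kappa>"
  shows "mpoly_eval \<kappa> \<sigma> (p + q) = mpoly_eval \<kappa> \<sigma> p + mpoly_eval \<kappa> \<sigma> q"
proof -
  interpret comm_ring_hom \<kappa> by fact
  let ?S = "Poly_Mapping.keys p \<union> Poly_Mapping.keys q"
  have S: "finite ?S" by simp
  have "mpoly_eval \<kappa> \<sigma> (p + q) = (\<Sum>m\<in>?S. \<kappa> (Poly_Mapping.lookup (p + q) m) * monom_eval \<sigma> m)"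
    by (rule mpoly_eval_superset[OF S]) (simp_all add: keys_add)
  also have "\<dots> = (\<Sum>m\<in>?S. \<kappa> (Poly_Mapping.lookup p m) * monom_eval \<sigma> m)
      + (\<Sum>m\<in>?S. \<kappa> (Poly_Mapping.lookup q m) * monom_eval \<sigma> m)"
    by (simp add: lookup_add hom_add distrib_right sum.distrib)
  also have "\<dots> = mpoly_eval \<kappa> \<sigma> p + mpoly_eval \<kappa> \<sigma> q"
    by (simp add: mpoly_eval_superset[OF S])
  finally show ?thesis .
qed

lemma mpoly_eval_single:
  "\<kappa> 0 = 0 \<Longrightarrow> mpoly_eval \<kappa> \<sigma> (Poly_Mapping.single m c) = \<kappa> c * monom_eval \<sigma> m"
  by (cases "c = 0") (auto simp: mpoly_eval_def)

lemma sum_single_lookup: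
  "(\<Sum>m\<in>Poly_Mapping.keys p. Poly_Mapping.single m (Poly_Mapping.lookup p m)) = p"
  by (rule poly_mapping_eqI)
     (auto simp: lookup_sum lookup_single when_def in_keys_iff sum.delta' cong: sum.cong)

lemma mpoly_eval_sum:
  "comm_ring_hom \<kappa> \<Longrightarrow> mpoly_eval \<kappa> \<sigma> (sum f I) = (\<Sum>i\<in>I. mpoly_eval \<kappa> \<sigma> (f i))"
  by (induction I rule: infinite_finite_induct) (auto simp: mpoly_eval_add)

lemma mpoly_eval_mult:
  assumes "comm_ring_hom \<kappa>"
  shows "mpoly_eval \<kappa> \<sigma> (p * q) = mpoly_eval \<kappa> \<sigma> p * mpoly_eval \<kappa> \<sigma> q"
proof -
  interpret comm_ring_hom \<kappa> by fact
  let ?P = "Poly_Mapping.keys p" and ?Q = "Poly_Mapping.keys q"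
  let ?p = "Poly_Mapping.lookup p" and ?q = "Poly_Mapping.lookup q"
  have "p * q = (\<Sum>m\<in>?P. Poly_Mapping.single m (?p m)) * (\<Sum>m\<in>?Q. Poly_Mapping.single m (?q m))"
    by (simp add: sum_single_lookup)
  also have "\<dots> = (\<Sum>m\<in>?P. \<Sum>m'\<in>?Q. Poly_Mapping.single (m + m') (?p m * ?q m'))"
    by (simp add: sum_product mult_single)
  finally have "mpoly_eval \<kappa> \<sigma> (p * q)
      = (\<Sum>m\<in>?P. \<Sum>m'\<in>?Q. \<kappa> (?p m) * monom_eval \<sigma> m * (\<kappa> (?q m') * monom_eval \<sigma> m'))"
    by (simp add: mpoly_eval_sum assms mpoly_eval_single monom_eval_add hom_mult mult_ac)
  also have "\<dots> = mpoly_eval \<kappa> \<sigma> p * mpoly_eval \<kappa> \<sigma> q"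
    by (simp add: mpoly_eval_def sum_product)
  finally show ?thesis .
qed

lemma comm_ring_hom_mpoly_eval:
  assumes "comm_ring_hom \<kappa>"
  shows "comm_ring_hom (mpoly_eval \<kappa> \<sigma>)"
proof -
  interpret comm_ring_hom \<kappa> by fact
  have "mpoly_eval \<kappa> \<sigma> 1 = 1"
    using mpoly_eval_single[of \<kappa> \<sigma> 0 1] by simp
  then show ?thesis
    by unfold_locales (simp_all add: mpoly_eval_add mpoly_eval_mult assms)
qed

lemma comm_ring_hom_mconst: "comm_ring_hom (mconst :: 'a::comm_ring_1 \<Rightarrow> 'a mpoly)"
  by unfold_locales (auto simp: mconst_def single_add mult_single)

lemma mpoly_eval_mvar: "\<kappa> 0 = 0 \<Longrightarrow> \<kappa> 1 = 1 \<Longrightarrow> mpoly_eval \<kappa> \<sigma> (mvar j) = \<sigma> j"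
  by (simp add: mvar_def mpoly_eval_single monom_eval_single)

lemma mpoly_eval_mconst: "\<kappa> 0 = 0 \<Longrightarrow> mpoly_eval \<kappa> \<sigma> (mconst c) = \<kappa> c"
  by (simp add: mconst_def mpoly_eval_single)

lemma hom_mpoly_eval:
  assumes "comm_ring_hom h"
  shows "h (mpoly_eval \<kappa> \<sigma> p) = mpoly_eval (h \<circ> \<kappa>) (h \<circ> \<sigma>) p"
proof -
  interpret comm_ring_hom h by fact
  show ?thesis unfolding mpoly_eval_def monom_eval_def by (simp add: hom_distribs)
qed

lemma mpoly_eval_cong:
  assumes "\<And>v. v \<in> mvars p \<Longrightarrow> \<sigma> v = \<sigma>' v"
  shows "mpoly_eval \<kappa> \<sigma> p = mpoly_eval \<kappa> \<sigma>' p"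
  unfolding mpoly_eval_def monom_eval_def
  by (intro sum.cong refl arg_cong2[where f = "(*)"] prod.cong)
     (use assms in \<open>force simp: mvars_def\<close>)

lemma mvar_power: "mvar v ^ k = Poly_Mapping.single (Poly_Mapping.single v k) (1::'a::comm_ring_1)"
  by (induction k) (auto simp: mvar_def mult_single single_add[symmetric] add.commute)

lemma prod_mvar_power:
  "finite K \<Longrightarrow> (\<Prod>v\<in>K. (mvar v :: 'a::comm_ring_1 mpoly) ^ e v)
      = Poly_Mapping.single (\<Sum>v\<in>K. Poly_Mapping.single v (e v)) 1"
  by (induction rule: finite_induct) (simp_all add: mvar_power mult_single)

lemma monom_eval_mvar: "monom_eval mvar m = Poly_Mapping.single m (1::'a::comm_ring_1)"
  unfolding monom_eval_def prod_mvar_power[OF finite_keys] by (simp add: sum_single_lookup)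

lemma mpoly_eval_mconst_mvar [simp]: "mpoly_eval mconst mvar p = (p :: 'a::comm_ring_1 mpoly)"
  unfolding mpoly_eval_def monom_eval_mvar by (simp add: mconst_def mult_single sum_single_lookup)

lemma msubst_eq_mpoly_eval: "msubst \<sigma> = mpoly_eval mconst \<sigma>"
  by (auto simp: msubst_def mpoly_eval_def monom_eval_def fun_eq_iff)


section \<open>Finite fields\<close>

lemma one_less_card_UNIV_field: "1 < CARD('a::{finite,field})"
proof -
  have "card {0, 1::'a} \<le> CARD('a)"
    by (rule card_mono) auto
  then show ?thesis by simp
qed

lemma power_card_UNIV_eq_self:
  fixes x :: "'a::{finite,field}"
  shows "x ^ CARD('a) = x"
proof (cases "x = 0")
  case True
  then show ?thesis using one_less_card_UNIV_field[where 'a = 'a] by simp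
next
  case False
  let ?U = "UNIV - {0 :: 'a}"
  have "bij_betw ((*) x) ?U ?U"
    by (rule bij_betwI[where g = "\<lambda>y. y / x"]) (use False in auto)
  then have "(\<Prod>y\<in>?U. x * y) = \<Prod>?U"
    using prod.reindex_bij_betw[where g = "\<lambda>y. y"] by blast
  then have "x ^ card ?U * \<Prod>?U = \<Prod>?U"
    by (simp add: prod.distrib)
  then have "x ^ (CARD('a) - 1) = 1"
    by (simp add: card_Diff_singleton)
  then have "x * x ^ (CARD('a) - 1) = x"
    by simp
  then show ?thesis
    using one_less_card_UNIV_field[where 'a = 'a] by (simp flip: power_Suc)
qed

lemma power_card_UNIV_power_eq_self:
  fixes x :: "'a::{finite,field}"
  shows "x ^ (CARD('a) ^ r) = x"
  by (induction r) (simp_all add: power_card_UNIV_eq_self power_mult)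

text \<open>The polynomial \<open>(X + 1)^q - X^q - 1\<close> has degree \<open>< q\<close> but vanishes on all \<open>q\<close> elements,
  so all its coefficients \<open>q choose k\<close> vanish.\<close>
lemma binomial_card_UNIV_eq_0:
  assumes "0 < k" "k < CARD('a::{finite,field})"
  shows "of_nat (CARD('a) choose k) = (0::'a)"
proof -
  define q where "q = CARD('a)"
  have q: "1 < q" unfolding q_def by (rule one_less_card_UNIV_field)
  define P :: "'a poly" where "P = [:1, 1:] ^ q - monom 1 q - 1"
  have coeff_P: "coeff P i = (if 0 < i \<and> i < q then of_nat (q choose i) else 0)" for i
  proof -
    have "coeff ([:1, 1:] ^ q) i = (if i \<le> q then of_nat (q choose i) else (0::'a))"
    proof (cases "i \<le> q")
      case False
      have "degree ([:1::'a, 1:] ^ q) \<le> q"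
        using degree_power_le[of "[:1::'a, 1:]" q] by simp
      then show ?thesis using False by (simp add: coeff_eq_0)
    qed (simp add: coeff_linear_poly_power)
    then show ?thesis
      using q by (auto simp: P_def coeff_monom coeff_1)
  qed
  have "P = 0"
  proof (rule ccontr)
    assume "P \<noteq> 0"
    have "degree P < q"
      using q by (intro le_less_trans[OF degree_le[of "q - 1"]]) (auto simp: coeff_P)
    moreover have "{x. poly P x = 0} = UNIV"
      by (auto simp: P_def q_def power_card_UNIV_eq_self poly_monom)
    ultimately show False
      using card_poly_roots_bound[OF \<open>P \<noteq> 0\<close>] by (simp add: q_def)
  qed
  then have "coeff P k = 0" by simp
  then show ?thesis using assms by (simp add: coeff_P q_def)
qed

lemma mpoly_add_power_card_UNIV:
  fixes u v :: "'a::{finite,field} mpoly"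
  shows "(u + v) ^ CARD('a) = u ^ CARD('a) + v ^ CARD('a)"
proof -
  define q where "q = CARD('a)"
  have "(u + v) ^ q = (\<Sum>k\<le>q. of_nat (q choose k) * u ^ k * v ^ (q - k))"
    by (rule binomial_ring)
  also have "\<dots> = (\<Sum>k\<in>{0, q}. of_nat (q choose k) * u ^ k * v ^ (q - k))"
  proof (intro sum.mono_neutral_right ballI)
    fix k assume "k \<in> {..q} - {0, q}"
    then have "of_nat (q choose k) = mconst (0::'a)"
      unfolding q_def by (subst binomial_card_UNIV_eq_0[symmetric]) (auto simp: mconst_def)
    then show "of_nat (q choose k) * u ^ k * v ^ (q - k) = 0"
      by (simp add: mconst_def)
  qed auto
  finally show ?thesis
    using one_less_card_UNIV_field[where 'a = 'a] by (simp add: add_ac q_def)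
qed

lemma mpoly_sum_power_card_UNIV_power:
  fixes g :: "'b \<Rightarrow> 'a::{finite,field} mpoly"
  shows "(sum g I) ^ (CARD('a) ^ r) = (\<Sum>i\<in>I. g i ^ (CARD('a) ^ r))"
proof -
  have add: "(u + v) ^ (CARD('a) ^ r) = u ^ (CARD('a) ^ r) + v ^ (CARD('a) ^ r)"
    for u v :: "'a mpoly"
    by (induction r) (simp_all add: mpoly_add_power_card_UNIV power_Suc2 power_mult del: power_Suc)
  show ?thesis
    by (induction I rule: infinite_finite_induct) (simp_all add: add)
qed

lemma lin_comb_power_card_UNIV_power:
  fixes c :: "nat \<Rightarrow> 'a::{finite,field}"
  shows "(\<Sum>i\<in>I. mconst (c i) * mvar i) ^ (CARD('a) ^ r)
       = (\<Sum>i\<in>I. mconst (c i) * mvar i ^ (CARD('a) ^ r))"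
proof -
  interpret comm_ring_hom "mconst :: 'a \<Rightarrow> 'a mpoly" by (rule comm_ring_hom_mconst)
  show ?thesis
    by (simp add: mpoly_sum_power_card_UNIV_power power_mult_distrib power_card_UNIV_power_eq_self
        flip: hom_power)
qed


section \<open>Variables\<close>

definition restrict_vars :: "nat set \<Rightarrow> 'a::comm_ring_1 mpoly \<Rightarrow> 'a mpoly" where
  "restrict_vars S = mpoly_eval mconst (\<lambda>v. if v \<in> S then mvar v else 0)"

lemma comm_ring_hom_restrict_vars: "comm_ring_hom (restrict_vars S)"
  unfolding restrict_vars_def by (rule comm_ring_hom_mpoly_eval[OF comm_ring_hom_mconst])

lemma restrict_vars_mvar: "restrict_vars S (mvar v) = (if v \<in> S then mvar v else 0)"
  unfolding restrict_vars_def by (rule mpoly_eval_mvar) (simp_all add: mconst_def)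

lemma restrict_vars_mconst: "restrict_vars S (mconst c) = mconst c"
  unfolding restrict_vars_def by (rule mpoly_eval_mconst) (simp add: mconst_def)

lemma monom_eval_restrict:
  "monom_eval (\<lambda>v. if v \<in> S then mvar v else 0) m =
     (if Poly_Mapping.keys m \<subseteq> S then Poly_Mapping.single m (1::'a::comm_ring_1) else 0)"
proof (cases "Poly_Mapping.keys m \<subseteq> S")
  case True
  then have "monom_eval (\<lambda>v. if v \<in> S then mvar v else 0) m = monom_eval mvar m"
    unfolding monom_eval_def by (intro prod.cong) auto
  then show ?thesis using True by (simp add: monom_eval_mvar)
next
  case False
  then obtain v where v: "v \<in> Poly_Mapping.keys m" "v \<notin> S" by auto
  then have "(if v \<in> S then mvar v else 0) ^ Poly_Mapping.lookup m v = (0::'a mpoly)"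
    by (simp add: in_keys_iff zero_power)
  then have "monom_eval (\<lambda>v. if v \<in> S then mvar v else 0) m = (0::'a mpoly)"
    unfolding monom_eval_def by (rule prod_zero[OF finite_keys bexI[OF _ v(1)]])
  then show ?thesis using False by simp
qed

lemma lookup_restrict_vars:
  "Poly_Mapping.lookup (restrict_vars S p) m =
     (if Poly_Mapping.keys m \<subseteq> S then Poly_Mapping.lookup p m else 0)"
proof -
  have "restrict_vars S p = (\<Sum>m'\<in>Poly_Mapping.keys p. Poly_Mapping.single m'
      (if Poly_Mapping.keys m' \<subseteq> S then Poly_Mapping.lookup p m' else 0))"
    unfolding restrict_vars_def mpoly_eval_def monom_eval_restrict
    by (intro sum.cong) (auto simp: mconst_def mult_single)
  then show ?thesis
    by (auto simp: lookup_sum lookup_single when_def in_keys_iff sum.delta')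
qed

lemma mvars_subset_iff_restrict_vars: "mvars p \<subseteq> S \<longleftrightarrow> restrict_vars S p = p"
proof
  assume "mvars p \<subseteq> S"
  then have "restrict_vars S p = mpoly_eval mconst mvar p"
    unfolding restrict_vars_def by (intro mpoly_eval_cong) auto
  then show "restrict_vars S p = p" by simp
next
  assume fixed: "restrict_vars S p = p"
  show "mvars p \<subseteq> S"
  proof
    fix v assume "v \<in> mvars p"
    then obtain m where m: "m \<in> Poly_Mapping.keys p" "v \<in> Poly_Mapping.keys m"
      by (auto simp: mvars_def)
    have "Poly_Mapping.lookup p m = Poly_Mapping.lookup (restrict_vars S p) m"
      using fixed by simp
    then show "v \<in> S"
      using m by (auto simp: lookup_restrict_vars in_keys_iff split: if_splits)
  qed
qed

lemma mvars_mvar: "mvars (mvar v) = {v}"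
  by (simp add: mvars_def mvar_def)

lemma mvars_mult_subset:
  assumes "mvars p \<subseteq> S" "mvars q \<subseteq> S"
  shows "mvars (p * q) \<subseteq> S"
proof -
  interpret comm_ring_hom "restrict_vars S :: 'a::comm_ring_1 mpoly \<Rightarrow> _"
    by (rule comm_ring_hom_restrict_vars)
  show ?thesis using assms by (simp add: mvars_subset_iff_restrict_vars hom_mult)
qed

lemma mvars_power_subset:
  assumes "mvars p \<subseteq> S"
  shows "mvars (p ^ k) \<subseteq> S"
proof -
  interpret comm_ring_hom "restrict_vars S :: 'a::comm_ring_1 mpoly \<Rightarrow> _"
    by (rule comm_ring_hom_restrict_vars)
  show ?thesis using assms by (simp add: mvars_subset_iff_restrict_vars hom_power)
qed

lemma mvars_det_subset:
  assumes "M \<in> carrier_mat n n" "\<And>i j. i < n \<Longrightarrow> j < n \<Longrightarrow> mvars (M $$ (i, j)) \<subseteq> S"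
  shows "mvars (det M) \<subseteq> S"
proof -
  interpret comm_ring_hom "restrict_vars S :: 'a::comm_ring_1 mpoly \<Rightarrow> _"
    by (rule comm_ring_hom_restrict_vars)
  have "map_mat (restrict_vars S) M = M"
    using assms by (intro eq_matI) (auto simp flip: mvars_subset_iff_restrict_vars)
  then show ?thesis
    using hom_det[of M] by (simp add: mvars_subset_iff_restrict_vars)
qed

lemma mvars_msubst_subset:
  assumes "\<And>v. v \<in> mvars p \<Longrightarrow> mvars (\<sigma> v) \<subseteq> S"
  shows "mvars (msubst \<sigma> p) \<subseteq> S"
proof -
  have restrict_mconst: "restrict_vars S \<circ> mconst = mconst"
    by (rule ext) (simp add: restrict_vars_mconst)
  have "restrict_vars S (msubst \<sigma> p) = mpoly_eval mconst (restrict_vars S \<circ> \<sigma>) p"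
    unfolding msubst_eq_mpoly_eval
    by (subst hom_mpoly_eval[OF comm_ring_hom_restrict_vars]) (simp add: restrict_mconst)
  also have "\<dots> = msubst \<sigma> p"
    unfolding msubst_eq_mpoly_eval
    by (rule mpoly_eval_cong) (use assms in \<open>simp add: mvars_subset_iff_restrict_vars\<close>)
  finally show ?thesis by (simp add: mvars_subset_iff_restrict_vars)
qed

lemma mvars_omit_var_subset: "mvars f \<subseteq> {..<c} \<Longrightarrow> mvars (omit_var k f) \<subseteq> {..<Suc c}"
  unfolding omit_var_def by (rule mvars_msubst_subset) (auto simp: mvars_mvar)

lemma mvars_quotient_subset:
  fixes L p :: "'a::idom mpoly"
  assumes "L * p = N" "L \<noteq> 0" "mvars L \<subseteq> S" "mvars N \<subseteq> S"
  shows "mvars p \<subseteq> S"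
proof -
  interpret comm_ring_hom "restrict_vars S :: 'a mpoly \<Rightarrow> _"
    by (rule comm_ring_hom_restrict_vars)
  have "L * restrict_vars S p = L * p"
    using assms hom_mult[of L p] by (simp add: mvars_subset_iff_restrict_vars)
  then show ?thesis
    using \<open>L \<noteq> 0\<close> by (simp add: mvars_subset_iff_restrict_vars)
qed


section \<open>Univariate polynomials\<close>

lemma comm_ring_hom_const_poly: "comm_ring_hom (\<lambda>x::'b::comm_ring_1. [:x:])"
  by unfold_locales (simp_all add: one_pCons)

lemma comm_ring_hom_poly: "comm_ring_hom (\<lambda>p::'b::comm_ring_1 poly. poly p x)"
  by unfold_locales simp_all

definition poly_in_var :: "nat \<Rightarrow> 'a::comm_ring_1 mpoly \<Rightarrow> 'a mpoly poly" where
  "poly_in_var n = mpoly_eval (\<lambda>c. [:mconst c:]) (\<lambda>v. if v = n then [:0, 1:] else [:mvar v:])"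

lemma comm_ring_hom_poly_in_var: "comm_ring_hom (poly_in_var n)"
proof -
  interpret comm_ring_hom "mconst :: 'a \<Rightarrow> 'a mpoly" by (rule comm_ring_hom_mconst)
  have "comm_ring_hom (\<lambda>c::'a. [:mconst c:])"
    by unfold_locales (simp_all add: hom_add hom_mult one_pCons)
  then show ?thesis
    unfolding poly_in_var_def by (rule comm_ring_hom_mpoly_eval)
qed

lemma poly_in_var_mvar [simp]: "poly_in_var n (mvar v) = (if v = n then [:0, 1:] else [:mvar v:])"
  unfolding poly_in_var_def by (rule mpoly_eval_mvar) (simp_all add: mconst_def one_pCons)

lemma poly_poly_in_var:
  "poly (poly_in_var n P) t = mpoly_eval mconst (\<lambda>v. if v = n then t else mvar v) P"
  unfolding poly_in_var_def hom_mpoly_eval[OF comm_ring_hom_poly]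
  by (rule arg_cong2[where f = "\<lambda>\<kappa> \<sigma>. mpoly_eval \<kappa> \<sigma> P"]) (auto simp: fun_eq_iff)

lemma poly_poly_in_var_mvar [simp]: "poly (poly_in_var n P) (mvar n) = P"
proof -
  have id: "(\<lambda>v. if v = n then mvar n else mvar v) = mvar" by auto
  show ?thesis by (simp only: poly_poly_in_var id mpoly_eval_mconst_mvar)
qed

lemma poly_in_var_eq_const:
  assumes "n \<notin> mvars P"
  shows "poly_in_var n P = [:P:]"
proof -
  have "poly_in_var n P = mpoly_eval ((\<lambda>x. [:x:]) \<circ> mconst) ((\<lambda>x. [:x:]) \<circ> mvar) P"
    unfolding poly_in_var_def comp_def by (rule mpoly_eval_cong) (use assms in auto)
  also have "\<dots> = [:P:]"
    by (simp flip: hom_mpoly_eval[OF comm_ring_hom_const_poly])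
  finally show ?thesis .
qed


lemma degree_sum_monom_powers:
  fixes C :: "nat \<Rightarrow> 'b::comm_ring_1"
  assumes q: "1 < q" and "C n \<noteq> 0"
  shows "degree (\<Sum>r\<le>n. monom (C r) (q ^ r)) = q ^ n"
    and "lead_coeff (\<Sum>r\<le>n. monom (C r) (q ^ r)) = C n"
proof -
  let ?P = "\<Sum>r\<le>n. monom (C r) (q ^ r)"
  have coeff: "coeff ?P (q ^ n) = C n"
    using q by (simp add: coeff_sum coeff_monom power_inject_exp)
  have "degree ?P \<le> q ^ n"
  proof (rule degree_sum_le)
    fix r assume "r \<in> {..n}"
    then have "q ^ r \<le> q ^ n" using q by (intro power_increasing) auto
    then show "degree (monom (C r) (q ^ r)) \<le> q ^ n"
      using degree_monom_le order_trans by blast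
  qed simp
  moreover have "q ^ n \<le> degree ?P"
    using coeff \<open>C n \<noteq> 0\<close> by (intro le_degree) simp
  ultimately show "degree ?P = q ^ n" by simp
  then show "lead_coeff ?P = C n" using coeff by simp
qed

lemma monic_factor_of_same_degree:
  fixes P V Q :: "'b::idom poly"
  assumes "P = V * Q" "P \<noteq> 0" "lead_coeff V = 1" "degree V = degree P"
  shows "Q = [:lead_coeff P:]"
proof -
  have "V \<noteq> 0" "Q \<noteq> 0" using assms(1,2) by auto
  then have "degree Q = 0"
    using assms(1,4) degree_mult_eq[of V Q] by simp
  moreover have "lead_coeff P = lead_coeff Q"
    using assms(1,3) by (simp add: lead_coeff_mult)
  ultimately show ?thesis
    using degree_0_id[of Q] by simp
qed


section \<open>Linear forms\<close>

definition lin_comb :: "(nat \<Rightarrow> 'a::comm_ring_1) \<Rightarrow> nat \<Rightarrow> 'a mpoly" where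
  "lin_comb c j = (\<Sum>i<j. mconst (c i) * mvar i)"

definition lin_form :: "nat \<Rightarrow> (nat \<Rightarrow> 'a::comm_ring_1) \<Rightarrow> 'a mpoly" where
  "lin_form j c = mvar j - lin_comb c j"

definition lin_subst :: "nat \<Rightarrow> (nat \<Rightarrow> 'a::comm_ring_1) \<Rightarrow> 'a mpoly \<Rightarrow> 'a mpoly" where
  "lin_subst j c = mpoly_eval mconst (\<lambda>v. if v = j then lin_comb c j else mvar v)"

lemma comm_ring_hom_lin_subst: "comm_ring_hom (lin_subst j c)"
  unfolding lin_subst_def by (rule comm_ring_hom_mpoly_eval[OF comm_ring_hom_mconst])

lemma lin_subst_mvar [simp]: "lin_subst j c (mvar v) = (if v = j then lin_comb c j else mvar v)"
  unfolding lin_subst_def by (rule mpoly_eval_mvar) (simp_all add: mconst_def)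

lemma lin_subst_mconst [simp]: "lin_subst j c (mconst d) = mconst d"
  unfolding lin_subst_def by (rule mpoly_eval_mconst) (simp add: mconst_def)

lemma lin_subst_lin_comb:
  assumes "j' \<le> j"
  shows "lin_subst j c (lin_comb d j') = lin_comb d j'"
proof -
  interpret comm_ring_hom "lin_subst j c" by (rule comm_ring_hom_lin_subst)
  show ?thesis unfolding lin_comb_def using assms by (simp add: hom_distribs)
qed

lemma lin_subst_lin_form_self: "lin_subst j c (lin_form j c) = 0"
proof -
  interpret comm_ring_hom "lin_subst j c" by (rule comm_ring_hom_lin_subst)
  show ?thesis unfolding lin_form_def by (simp add: hom_distribs lin_subst_lin_comb)
qed

lemma mvars_lin_comb_subset: "mvars (lin_comb c j) \<subseteq> {..<j}"
proof -
  interpret comm_ring_hom "restrict_vars {..<j} :: 'a::comm_ring_1 mpoly \<Rightarrow> _"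
    by (rule comm_ring_hom_restrict_vars)
  have "restrict_vars {..<j} (lin_comb c j) = lin_comb c j"
    unfolding lin_comb_def
    by (simp add: hom_distribs restrict_vars_mvar restrict_vars_mconst)
  then show ?thesis by (simp add: mvars_subset_iff_restrict_vars)
qed

text \<open>This is the factor theorem for \<open>P\<close> viewed as a polynomial in \<open>x\<^sub>j\<close>.\<close>
lemma lin_form_dvd_iff: "lin_form j c dvd P \<longleftrightarrow> lin_subst j c P = 0"
proof
  interpret comm_ring_hom "lin_subst j c" by (rule comm_ring_hom_lin_subst)
  assume "lin_form j c dvd P"
  then have "lin_subst j c (lin_form j c) dvd lin_subst j c P"
    by (rule hom_dvd)
  then show "lin_subst j c P = 0" by (simp add: lin_subst_lin_form_self)
next
  interpret comm_ring_hom "\<lambda>p. poly p (mvar j)" by (rule comm_ring_hom_poly)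
  assume "lin_subst j c P = 0"
  then have "[:- lin_comb c j, 1:] dvd poly_in_var j P"
    by (simp add: lin_subst_def poly_poly_in_var flip: poly_eq_0_iff_dvd)
  then have "poly [:- lin_comb c j, 1:] (mvar j) dvd poly (poly_in_var j P) (mvar j)"
    by (rule hom_dvd)
  then show "lin_form j c dvd P" by (simp add: lin_form_def)
qed

lemma comm_ring_hom_id: "comm_ring_hom (id :: 'b::comm_ring_1 \<Rightarrow> 'b)"
  by unfold_locales simp_all

lemma mpoly_eval_id_mvar [simp]: "mpoly_eval id \<sigma> (mvar v) = \<sigma> v"
  by (simp add: mpoly_eval_mvar)

lemma mpoly_eval_id_mconst [simp]: "mpoly_eval id \<sigma> (mconst c) = c"
  by (simp add: mpoly_eval_mconst)

lemma mpoly_eval_id_lin_comb: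
  "mpoly_eval id (\<lambda>v. of_bool (v = k)) (lin_comb c j) = (if k < j then c k else 0)"
proof -
  interpret comm_ring_hom "mpoly_eval id (\<lambda>v. of_bool (v = k)) :: 'a::comm_ring_1 mpoly \<Rightarrow> 'a"
    by (rule comm_ring_hom_mpoly_eval[OF comm_ring_hom_id])
  have "mpoly_eval id (\<lambda>v. of_bool (v = k)) (lin_comb c j) = (\<Sum>i<j. if i = k then c i else 0)"
    unfolding lin_comb_def hom_sum by (intro sum.cong) (simp_all add: hom_mult)
  then show ?thesis by simp
qed

lemma renamed_lin_form_nonzero:
  fixes g :: "nat \<Rightarrow> nat"
  assumes "inj g"
  shows "mvar (g j) - (\<Sum>i<j. mconst (d i) * mvar (g i)) \<noteq> (0::'a::comm_ring_1 mpoly)"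
proof -
  interpret comm_ring_hom "mpoly_eval id (\<lambda>v. of_bool (v = g j)) :: 'a mpoly \<Rightarrow> 'a"
    by (rule comm_ring_hom_mpoly_eval[OF comm_ring_hom_id])
  have "(\<Sum>i<j. d i * of_bool (g i = g j)) = (0::'a)"
    by (intro sum.neutral) (auto simp: inj_eq[OF assms])
  then have "mpoly_eval id (\<lambda>v. of_bool (v = g j))
      (mvar (g j) - (\<Sum>i<j. mconst (d i) * mvar (g i))) = 1"
    by (simp add: hom_distribs)
  then show ?thesis by auto
qed

lemma lin_form_nonzero: "lin_form j c \<noteq> (0::'a::comm_ring_1 mpoly)"
  using renamed_lin_form_nonzero[of "\<lambda>i. i" j c] by (simp add: lin_form_def lin_comb_def)

lemma lin_subst_lin_form_nonzero:
  assumes "c \<in> {..<j} \<rightarrow>\<^sub>E UNIV" "d \<in> {..<j'} \<rightarrow>\<^sub>E UNIV" "(j, c) \<noteq> (j', d)"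
  shows "lin_subst j c (lin_form j' d) \<noteq> (0::'a::comm_ring_1 mpoly)"
proof -
  interpret subst: comm_ring_hom "lin_subst j c :: 'a mpoly \<Rightarrow> _" by (rule comm_ring_hom_lin_subst)
  show ?thesis
  proof (cases "j = j'")
    case True
    then obtain i where i: "i < j" "c i \<noteq> d i"
      using assms PiE_ext[of c "{..<j}" "\<lambda>_. UNIV" d] by auto
    interpret eval: comm_ring_hom "mpoly_eval id (\<lambda>v. of_bool (v = i)) :: 'a mpoly \<Rightarrow> 'a"
      by (rule comm_ring_hom_mpoly_eval[OF comm_ring_hom_id])
    have "lin_subst j c (lin_form j' d) = lin_comb c j - lin_comb d j"
      by (simp add: True[symmetric] lin_form_def hom_distribs lin_subst_lin_comb)
    then have "mpoly_eval id (\<lambda>v. of_bool (v = i)) (lin_subst j c (lin_form j' d)) = c i - d i"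
      using i by (simp add: eval.hom_minus mpoly_eval_id_lin_comb)
    then show ?thesis using i by auto
  next
    case False
    interpret eval: comm_ring_hom "mpoly_eval id (\<lambda>v. of_bool (v = j')) :: 'a mpoly \<Rightarrow> 'a"
      by (rule comm_ring_hom_mpoly_eval[OF comm_ring_hom_id])
    have "(\<Sum>i<j'. d i * mpoly_eval id (\<lambda>v. of_bool (v = j')) (lin_subst j c (mvar i))) = 0"
      using False by (intro sum.neutral) (auto simp: mpoly_eval_id_lin_comb)
    then have "mpoly_eval id (\<lambda>v. of_bool (v = j')) (lin_subst j c (lin_form j' d)) = 1"
      using False by (simp add: lin_form_def lin_comb_def hom_distribs
          mpoly_eval_id_lin_comb)
    then show ?thesis by auto
  qed
qed

definition moore_index :: "nat \<Rightarrow> (nat \<times> (nat \<Rightarrow> 'a)) set" where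
  "moore_index n = (SIGMA j:{..<n}. {..<j} \<rightarrow>\<^sub>E UNIV)"

lemma mem_moore_index: "(j, c) \<in> moore_index n \<longleftrightarrow> j < n \<and> c \<in> {..<j} \<rightarrow>\<^sub>E UNIV"
  by (simp add: moore_index_def)

lemma finite_moore_index: "finite (moore_index n :: (nat \<times> (nat \<Rightarrow> 'a::finite)) set)"
  unfolding moore_index_def by (intro finite_SigmaI finite_PiE finite_lessThan finite)

lemma moore_index_Suc: "moore_index (Suc n) = moore_index n \<union> {n} \<times> ({..<n} \<rightarrow>\<^sub>E UNIV)"
proof -
  have "Sigma {n} (\<lambda>j. {..<j} \<rightarrow>\<^sub>E UNIV) = {n} \<times> ({..<n} \<rightarrow>\<^sub>E (UNIV :: 'a set))"
    by (rule Sigma_cong[OF refl]) (simp only: singleton_iff)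
  moreover have "{..<Suc n} = {..<n} \<union> {n}" by auto
  ultimately show ?thesis
    unfolding moore_index_def by (simp only: Sigma_Un_distrib1)
qed

lemma moore_index_mono: "a' \<le> a \<Longrightarrow> moore_index a' \<subseteq> moore_index a"
  unfolding moore_index_def by (rule Sigma_mono) auto

lemma prod_lin_forms_dvd_iff:
  fixes P :: "'a::idom mpoly"
  assumes "finite F" "F \<subseteq> moore_index m"
  shows "(\<Prod>(j, c)\<in>F. lin_form j c) dvd P \<longleftrightarrow> (\<forall>(j, c)\<in>F. lin_subst j c P = 0)"
proof
  assume "(\<Prod>(j, c)\<in>F. lin_form j c) dvd P"
  then have "lin_form j c dvd P" if "(j, c) \<in> F" for j c
    using dvd_prodI[OF \<open>finite F\<close> that, of "\<lambda>(j, c). lin_form j c"] dvd_trans by auto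
  then show "\<forall>(j, c)\<in>F. lin_subst j c P = 0"
    by (auto simp: lin_form_dvd_iff)
next
  assume "\<forall>(j, c)\<in>F. lin_subst j c P = 0"
  with assms show "(\<Prod>(j, c)\<in>F. lin_form j c) dvd P"
  proof (induction F rule: finite_induct)
    case (insert x F)
    obtain j c where x: "x = (j, c)" by fastforce
    interpret comm_ring_hom "lin_subst j c" by (rule comm_ring_hom_lin_subst)
    from insert obtain Q where Q: "P = (\<Prod>(j, c)\<in>F. lin_form j c) * Q"
      by (auto elim!: dvdE)
    have "lin_subst j c (lin_form j' d) \<noteq> 0" if "(j', d) \<in> F" for j' d
      using insert.hyps(2) insert.prems(1) that x
      by (intro lin_subst_lin_form_nonzero) (auto simp: mem_moore_index subset_iff)
    then have "lin_subst j c (\<Prod>(j, c)\<in>F. lin_form j c) \<noteq> 0"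
      using insert.hyps(1) by (auto simp: hom_prod prod_zero_iff)
    moreover have "lin_subst j c P = 0"
      using insert.prems(2) x by auto
    ultimately have "lin_form j c dvd Q"
      by (simp add: Q hom_mult lin_form_dvd_iff)
    then show ?case
      using insert.hyps x by (simp add: Q mult.commute mult_dvd_mono)
  qed simp
qed


section \<open>Determinants\<close>

lemma sum_mult_cofactor_other_column:
  assumes "A \<in> carrier_mat n n" "i < n" "j < n" "i \<noteq> j"
  shows "(\<Sum>r<n. A $$ (r, i) * cofactor A r j) = 0"
proof -
  have "(\<Sum>r<n. cofactor A r j * A $$ (r, i)) = (adj_mat A * A) $$ (j, i)"
    using assms by (auto simp: adj_mat_def scalar_prod_def atLeast0LessThan intro!: sum.cong)
  also have "\<dots> = 0"
    using adj_mat(3)[OF assms(1)] assms by simp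
  finally show ?thesis by (simp add: mult.commute)
qed

lemma det_eq_cofactor_if_column_comb:
  fixes A :: "'b::comm_ring_1 mat"
  assumes A: "A \<in> carrier_mat n n" and "j < n" "m < n" "I \<subseteq> {..<n} - {j}"
    and col: "\<And>r. r < n \<Longrightarrow> A $$ (r, j) = (\<Sum>i\<in>I. c i * A $$ (r, i)) + (if r = m then d else 0)"
  shows "det A = d * cofactor A m j"
proof -
  have "det A = (\<Sum>r<n. A $$ (r, j) * cofactor A r j)"
    by (rule laplace_expansion_column[OF A \<open>j < n\<close>])
  also have "\<dots> = (\<Sum>r<n. \<Sum>i\<in>I. c i * (A $$ (r, i) * cofactor A r j))
      + (\<Sum>r<n. (if r = m then d else 0) * cofactor A r j)"
    by (simp add: col distrib_right sum.distrib sum_distrib_right mult.assoc)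
  also have "(\<Sum>r<n. \<Sum>i\<in>I. c i * (A $$ (r, i) * cofactor A r j))
      = (\<Sum>i\<in>I. c i * (\<Sum>r<n. A $$ (r, i) * cofactor A r j))"
    by (subst sum.swap) (simp add: sum_distrib_left)
  also have "\<dots> = 0"
  proof (intro sum.neutral ballI)
    fix i assume "i \<in> I"
    then have "i < n" "i \<noteq> j" using assms(4) by auto
    then show "c i * (\<Sum>r<n. A $$ (r, i) * cofactor A r j) = 0"
      by (simp add: sum_mult_cofactor_other_column[OF A _ \<open>j < n\<close>])
  qed
  also have "(\<Sum>r<n. (if r = m then d else 0) * cofactor A r j)
      = (\<Sum>r<n. if r = m then d * cofactor A r j else 0)"
    by (intro sum.cong) simp_all
  also have "\<dots> = d * cofactor A m j"
    using \<open>m < n\<close> by simp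
  finally show ?thesis by simp
qed


section \<open>The Moore determinant\<close>

definition moore_mat :: "nat \<Rightarrow> 'a::{finite,field} mpoly mat" where
  "moore_mat n = mat n n (\<lambda>(r, k). mvar k ^ (CARD('a) ^ r))"

lemma mooreL_eq_det_moore_mat: "mooreL n = det (moore_mat n)"
  by (simp add: mooreL_def moore_mat_def)

lemma mat_delete_moore_mat_Suc: "mat_delete (moore_mat (Suc n)) n n = moore_mat n"
  unfolding mat_delete_def moore_mat_def by (intro eq_matI) auto

text \<open>Frobenius is additive, so after the substitution the last column is a linear combination
  of the others.\<close>
lemma lin_subst_mooreL_Suc: "lin_subst n c (mooreL (Suc n) :: 'a::{finite,field} mpoly) = 0"
proof -
  interpret comm_ring_hom "lin_subst n c :: 'a mpoly \<Rightarrow> 'a mpoly" by (rule comm_ring_hom_lin_subst)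
  define A where "A = map_mat (lin_subst n c) (moore_mat (Suc n) :: 'a mpoly mat)"
  have A: "A \<in> carrier_mat (Suc n) (Suc n)" by (simp add: A_def moore_mat_def)
  have "det A = 0 * cofactor A n n"
  proof (rule det_eq_cofactor_if_column_comb[OF A, where I = "{..<n}" and c = "\<lambda>i. mconst (c i)"])
    fix r assume r: "r < Suc n"
    have "A $$ (r, n) = (\<Sum>i<n. mconst (c i) * mvar i ^ (CARD('a) ^ r))"
      using r
      by (simp add: A_def moore_mat_def hom_distribs lin_comb_def lin_comb_power_card_UNIV_power)
    also have "\<dots> = (\<Sum>i<n. mconst (c i) * A $$ (r, i))"
      using r by (intro sum.cong) (auto simp: A_def moore_mat_def hom_distribs)
    finally show "A $$ (r, n) = (\<Sum>i\<in>{..<n}. mconst (c i) * A $$ (r, i)) + (if r = n then 0 else 0)"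
      by simp
  qed auto
  then show ?thesis by (simp add: mooreL_eq_det_moore_mat A_def)
qed

text \<open>The \<open>C r\<close> are the cofactors of the last column, whose entries are \<open>x\<^sub>n\<^sup>q\<^sup>^\<^sup>r\<close>.\<close>
lemma poly_in_var_mooreL_Suc:
  "\<exists>C. poly_in_var n (mooreL (Suc n) :: 'a::{finite,field} mpoly)
      = (\<Sum>r\<le>n. monom (C r) (CARD('a) ^ r)) \<and> C n = mooreL n"
proof -
  interpret comm_ring_hom "poly_in_var n :: 'a mpoly \<Rightarrow> 'a mpoly poly"
    by (rule comm_ring_hom_poly_in_var)
  interpret const: comm_ring_hom "\<lambda>x::'a mpoly. [:x:]" by (rule comm_ring_hom_const_poly)
  define A where "A = map_mat (poly_in_var n) (moore_mat (Suc n) :: 'a mpoly mat)"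
  have A: "A \<in> carrier_mat (Suc n) (Suc n)" by (simp add: A_def moore_mat_def)
  define C where "C r = cofactor (moore_mat (Suc n) :: 'a mpoly mat) r n" for r
  have cofactor_A: "cofactor A r n = [:C r:]" if "r < Suc n" for r
  proof -
    have "mat_delete A r n = map_mat (\<lambda>x. [:x:]) (mat_delete (moore_mat (Suc n)) r n)"
      unfolding mat_delete_def A_def moore_mat_def using that
      by (intro eq_matI) (auto simp: hom_power simp flip: const.hom_power)
    then show ?thesis
      by (simp only: cofactor_def C_def const.hom_det const.hom_mult const.hom_power
          const.hom_uminus const.hom_one)
  qed
  have "poly_in_var n (mooreL (Suc n)) = (\<Sum>r<Suc n. A $$ (r, n) * cofactor A r n)"
    unfolding mooreL_eq_det_moore_mat A_def[symmetric] hom_det[symmetric]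
    by (rule laplace_expansion_column[OF A]) simp
  also have "\<dots> = (\<Sum>r\<le>n. monom (C r) (CARD('a) ^ r))"
    unfolding lessThan_Suc_atMost
  proof (rule sum.cong[OF refl])
    fix r assume "r \<in> {..n}"
    then have r: "r < Suc n" by simp
    then have "A $$ (r, n) = [:0, 1:] ^ (CARD('a) ^ r)"
      by (simp add: A_def moore_mat_def hom_power)
    then show "A $$ (r, n) * cofactor A r n = monom (C r) (CARD('a) ^ r)"
      using r by (simp add: cofactor_A monom_altdef mult.commute)
  qed
  finally have "poly_in_var n (mooreL (Suc n)) = (\<Sum>r\<le>n. monom (C r) (CARD('a) ^ r))" .
  moreover have "C n = mooreL n"
    unfolding C_def cofactor_def mat_delete_moore_mat_Suc by (simp add: mooreL_eq_det_moore_mat)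
  ultimately show ?thesis by blast
qed

lemma poly_in_var_moore_layer:
  fixes n :: nat
  defines "V \<equiv> (\<Prod>(j, c)\<in>{n} \<times> ({..<n} \<rightarrow>\<^sub>E UNIV). lin_form j c :: 'a::{finite,field} mpoly)"
  shows "degree (poly_in_var n V) = CARD('a) ^ n" and "lead_coeff (poly_in_var n V) = 1"
proof -
  interpret comm_ring_hom "poly_in_var n :: 'a mpoly \<Rightarrow> 'a mpoly poly"
    by (rule comm_ring_hom_poly_in_var)
  have "n \<notin> mvars (lin_comb c n)" for c :: "nat \<Rightarrow> 'a"
    using mvars_lin_comb_subset by blast
  then have "poly_in_var n (lin_form n c) = [:- lin_comb c n, 1:]" for c :: "nat \<Rightarrow> 'a"
    by (simp add: lin_form_def hom_minus poly_in_var_eq_const)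
  then have V: "poly_in_var n V = (\<Prod>c\<in>{..<n} \<rightarrow>\<^sub>E UNIV. [:- lin_comb c n, 1:])"
    by (simp add: V_def hom_prod prod.cartesian_product[symmetric])
  show "degree (poly_in_var n V) = CARD('a) ^ n"
    unfolding V by (simp add: degree_prod_eq_sum_degree card_PiE)
  show "lead_coeff (poly_in_var n V) = 1"
    unfolding V by (simp add: lead_coeff_prod)
qed

lemma mooreL_Suc:
  assumes "mooreL n \<noteq> (0::'a::{finite,field} mpoly)"
  shows "mooreL (Suc n) = mooreL n * (\<Prod>(j, c)\<in>{n} \<times> ({..<n} \<rightarrow>\<^sub>E UNIV). lin_form j c :: 'a mpoly)"
    (is "_ = _ * ?V")
proof -
  interpret comm_ring_hom "poly_in_var n :: 'a mpoly \<Rightarrow> 'a mpoly poly"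
    by (rule comm_ring_hom_poly_in_var)
  have layer: "{n} \<times> ({..<n} \<rightarrow>\<^sub>E UNIV) \<subseteq> (moore_index (Suc n) :: (nat \<times> (nat \<Rightarrow> 'a)) set)"
    by (simp add: moore_index_Suc)
  have "?V dvd mooreL (Suc n)"
    using lin_subst_mooreL_Suc
    by (subst prod_lin_forms_dvd_iff[OF finite_subset[OF layer finite_moore_index] layer]) auto
  then obtain Q where Q: "mooreL (Suc n) = ?V * Q" by (auto elim!: dvdE)
  obtain C where
    C: "poly_in_var n (mooreL (Suc n) :: 'a mpoly) = (\<Sum>r\<le>n. monom (C r) (CARD('a) ^ r))"
    "C n = mooreL n"
    using poly_in_var_mooreL_Suc by blast
  define P where "P = poly_in_var n (mooreL (Suc n) :: 'a mpoly)"
  have deg_P: "degree P = CARD('a) ^ n" and lead_coeff_P: "lead_coeff P = mooreL n"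
    using degree_sum_monom_powers[OF one_less_card_UNIV_field, of C n] C assms
    by (simp_all add: P_def)
  have "poly_in_var n Q = [:lead_coeff P:]"
  proof (rule monic_factor_of_same_degree)
    show "P = poly_in_var n ?V * poly_in_var n Q"
      by (simp add: P_def Q hom_mult)
    show "P \<noteq> 0"
      using lead_coeff_P assms by auto
    show "lead_coeff (poly_in_var n ?V) = 1"
      by (rule poly_in_var_moore_layer(2))
    show "degree (poly_in_var n ?V) = degree P"
      by (simp only: deg_P poly_in_var_moore_layer(1))
  qed
  then have "Q = mooreL n"
    using poly_poly_in_var_mvar[of n Q] by (simp add: lead_coeff_P)
  then show ?thesis by (simp add: Q mult.commute)
qed

theorem mooreL_eq_prod_lin_forms:
  "mooreL n = (\<Prod>(j, c)\<in>moore_index n. lin_form j c :: 'a::{finite,field} mpoly)"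
proof (induction n)
  case 0
  show ?case by (simp add: mooreL_def moore_index_def)
next
  case (Suc n)
  have nonzero: "mooreL n \<noteq> (0::'a mpoly)"
    unfolding Suc.IH by (simp add: prod_zero_iff finite_moore_index lin_form_nonzero case_prod_beta)
  have finite: "finite ({n} \<times> ({..<n} \<rightarrow>\<^sub>E (UNIV :: 'a set)))"
    by (intro finite_cartesian_product finite_PiE) simp_all
  have disjoint: "moore_index n \<inter> {n} \<times> ({..<n} \<rightarrow>\<^sub>E UNIV) = {}"
    by (auto simp: moore_index_def)
  show ?case
    unfolding mooreL_Suc[OF nonzero] Suc.IH moore_index_Suc
    by (rule prod.union_disjoint[OF finite_moore_index finite disjoint, symmetric])
qed

lemma mooreL_nonzero: "mooreL n \<noteq> (0::'a::{finite,field} mpoly)"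
  by (simp add: mooreL_eq_prod_lin_forms prod_zero_iff finite_moore_index lin_form_nonzero
      case_prod_beta)


section \<open>The numerator under the substitutions\<close>

definition delta_mat :: "nat \<Rightarrow> nat \<Rightarrow> 'a::{finite,field} mpoly \<Rightarrow> 'a mpoly mat" where
  "delta_mat a b f = mat a a (\<lambda>(r, k).
      if r < a - 1 then mvar k ^ (CARD('a) ^ r)
      else mvar k ^ (CARD('a) ^ b) * omit_var k f)"

lemma deltaN_eq_det_delta_mat: "deltaN a b f = det (delta_mat a b f)"
  by (simp add: deltaN_def delta_mat_def)

text \<open>After substituting \<open>x\<^sub>j := \<Sum>\<^sub>i\<^sub><\<^sub>j c\<^sub>i x\<^sub>i\<close> into \<open>delta_mat a b f\<close> and subtracting
  \<open>\<Sum>\<^sub>i\<^sub><\<^sub>j c\<^sub>i\<close> times column \<open>i\<close> from column \<open>j\<close>, only the last entry of column \<open>j\<close>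
  survives; this is that entry. It does not depend on \<open>a\<close>.\<close>
definition delta_residue :: "nat \<Rightarrow> (nat \<Rightarrow> 'a) \<Rightarrow> nat \<Rightarrow> 'a::{finite,field} mpoly \<Rightarrow> 'a mpoly" where
  "delta_residue j c b f = lin_subst j c (mvar j ^ (CARD('a) ^ b) * omit_var j f)
     - (\<Sum>i<j. mconst (c i) * lin_subst j c (mvar i ^ (CARD('a) ^ b) * omit_var i f))"

lemma lin_subst_deltaN:
  fixes f :: "'a::{finite,field} mpoly"
  assumes j: "j < a"
  shows "lin_subst j c (deltaN a b f) =
    delta_residue j c b f * cofactor (map_mat (lin_subst j c) (delta_mat a b f)) (a - 1) j"
proof -
  interpret comm_ring_hom "lin_subst j c :: 'a mpoly \<Rightarrow> 'a mpoly" by (rule comm_ring_hom_lin_subst)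
  define A where "A = map_mat (lin_subst j c) (delta_mat a b f)"
  have A: "A \<in> carrier_mat a a" by (simp add: A_def delta_mat_def)
  have "det A = delta_residue j c b f * cofactor A (a - 1) j"
  proof (rule det_eq_cofactor_if_column_comb[OF A j, where I = "{..<j}" and c = "\<lambda>i. mconst (c i)"])
    fix r assume r: "r < a"
    show "A $$ (r, j) = (\<Sum>i\<in>{..<j}. mconst (c i) * A $$ (r, i))
        + (if r = a - 1 then delta_residue j c b f else 0)"
    proof (cases "r < a - 1")
      case True
      have "A $$ (r, j) = (\<Sum>i<j. mconst (c i) * mvar i ^ (CARD('a) ^ r))"
        using True j
        by (simp add: A_def delta_mat_def hom_distribs lin_comb_def lin_comb_power_card_UNIV_power)
      also have "\<dots> = (\<Sum>i<j. mconst (c i) * A $$ (r, i))"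
        using True j by (intro sum.cong) (auto simp: A_def delta_mat_def hom_distribs)
      finally show ?thesis using True by simp
    next
      case False
      then have "r = a - 1" using r by simp
      moreover have "(\<Sum>i<j. mconst (c i) * A $$ (a - 1, i)) =
          (\<Sum>i<j. mconst (c i) * lin_subst j c (mvar i ^ (CARD('a) ^ b) * omit_var i f))"
        using j by (intro sum.cong) (auto simp: A_def delta_mat_def)
      ultimately show ?thesis
        using j by (simp add: A_def delta_mat_def delta_residue_def)
    qed
  qed (use j in auto)
  then show ?thesis by (simp add: deltaN_eq_det_delta_mat A_def)
qed

text \<open>The minor is the Moore matrix in the variables other than \<open>x\<^sub>j\<close>.\<close>
lemma cofactor_lin_subst_delta_mat_nonzero:
  fixes f :: "'a::{finite,field} mpoly"
  assumes j: "j < a"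
  shows "cofactor (map_mat (lin_subst j c) (delta_mat a b f)) (a - 1) j \<noteq> 0"
proof -
  define h :: "'a mpoly \<Rightarrow> 'a mpoly" where "h = mpoly_eval mconst (\<lambda>k. mvar (insert_index j k))"
  interpret comm_ring_hom h
    unfolding h_def by (rule comm_ring_hom_mpoly_eval[OF comm_ring_hom_mconst])
  interpret subst: comm_ring_hom "lin_subst j c :: 'a mpoly \<Rightarrow> 'a mpoly"
    by (rule comm_ring_hom_lin_subst)
  have h_mvar: "h (mvar k) = mvar (insert_index j k)" for k
    unfolding h_def by (rule mpoly_eval_mvar) (simp_all add: mconst_def)
  have h_mconst: "h (mconst d) = mconst d" for d
    unfolding h_def by (rule mpoly_eval_mconst) (simp add: mconst_def)
  have inj: "inj (insert_index j)"
    by (rule injI) (auto simp: insert_index_def split: if_splits)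
  have "mat_delete (map_mat (lin_subst j c) (delta_mat a b f)) (a - 1) j
      = map_mat h (moore_mat (a - 1))"
    unfolding mat_delete_def delta_mat_def moore_mat_def using j
    by (intro eq_matI) (auto simp: subst.hom_power hom_power h_mvar insert_index_def)
  then have "det (mat_delete (map_mat (lin_subst j c) (delta_mat a b f)) (a - 1) j)
      = (\<Prod>(j', d)\<in>moore_index (a - 1). h (lin_form j' d))"
    by (simp add: mooreL_eq_det_moore_mat[symmetric] mooreL_eq_prod_lin_forms hom_prod
        case_prod_beta)
  also have "\<dots> \<noteq> 0"
  proof -
    have "h (lin_form j' d) \<noteq> 0" for j' d
      using renamed_lin_form_nonzero[OF inj, of j' d]
      by (simp add: lin_form_def lin_comb_def hom_distribs h_mvar h_mconst)
    then show ?thesis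
      by (simp add: prod_zero_iff finite_moore_index case_prod_beta)
  qed
  finally show ?thesis by (simp add: cofactor_def)
qed

lemma lin_subst_deltaN_eq_0_iff:
  assumes "j < a"
  shows "lin_subst j c (deltaN a b f) = 0 \<longleftrightarrow> delta_residue j c b f = 0"
  unfolding lin_subst_deltaN[OF assms] mult_eq_0_iff
  using cofactor_lin_subst_delta_mat_nonzero[OF assms] by blast

lemma mooreL_dvd_deltaN_iff:
  "mooreL a dvd deltaN a b f \<longleftrightarrow> (\<forall>(j, c)\<in>moore_index a. delta_residue j c b f = 0)"
  unfolding mooreL_eq_prod_lin_forms
  by (subst prod_lin_forms_dvd_iff[OF finite_moore_index order_refl])
     (auto simp: moore_index_def lin_subst_deltaN_eq_0_iff)


section \<open>Polynomiality\<close>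

lemma mvars_mooreL_subset: "mvars (mooreL a :: 'a::{finite,field} mpoly) \<subseteq> {..<a}"
  unfolding mooreL_eq_det_moore_mat
  by (rule mvars_det_subset[of _ a])
     (auto simp: moore_mat_def mvars_mvar intro!: mvars_power_subset)

lemma mvars_deltaN_subset:
  fixes f :: "'a::{finite,field} mpoly"
  assumes "mvars f \<subseteq> {..<c}" "a \<le> c + 1"
  shows "mvars (deltaN a b f) \<subseteq> {..<c + 1}"
  unfolding deltaN_eq_det_delta_mat
proof (rule mvars_det_subset[of _ a])
  fix r k assume "r < a" "k < a"
  then have "mvars (mvar k :: 'a mpoly) \<subseteq> {..<c + 1}"
    using assms(2) by (simp add: mvars_mvar)
  then have power: "mvars ((mvar k :: 'a mpoly) ^ e) \<subseteq> {..<c + 1}" for e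
    by (rule mvars_power_subset)
  have "mvars (omit_var k f) \<subseteq> {..<c + 1}"
    using mvars_omit_var_subset[OF assms(1)] by simp
  then have "mvars (mvar k ^ e * omit_var k f) \<subseteq> {..<c + 1}" for e
    by (rule mvars_mult_subset[OF power])
  then show "mvars (delta_mat a b f $$ (r, k)) \<subseteq> {..<c + 1}"
    using \<open>r < a\<close> \<open>k < a\<close> power by (simp add: delta_mat_def)
qed (simp add: delta_mat_def)

lemma is_poly_in_delta_iff:
  fixes f :: "'a::{finite,field} mpoly"
  assumes "mvars f \<subseteq> {..<c}" "a \<le> c + 1"
  shows "is_poly_in (c + 1) (delta a b f) \<longleftrightarrow> mooreL a dvd deltaN a b f"
proof
  assume "is_poly_in (c + 1) (delta a b f)"
  then obtain p where "Fract (deltaN a b f) (mooreL a) = Fract p 1"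
    unfolding is_poly_in_def delta_def by blast
  then have "deltaN a b f * 1 = p * mooreL a"
    using eq_fract(1)[OF mooreL_nonzero one_neq_zero] by blast
  then show "mooreL a dvd deltaN a b f" by simp
next
  assume "mooreL a dvd deltaN a b f"
  then obtain p where p: "deltaN a b f = mooreL a * p" by (elim dvdE)
  have "mvars (mooreL a :: 'a mpoly) \<subseteq> {..<c + 1}"
    using mvars_mooreL_subset[where 'a = 'a, of a] assms(2) by auto
  then have "mvars p \<subseteq> {..<c + 1}"
    by (rule mvars_quotient_subset[OF p[symmetric] mooreL_nonzero _ mvars_deltaN_subset[OF assms]])
  moreover have "delta a b f = Fract p 1"
    unfolding delta_def p eq_fract(1)[OF mooreL_nonzero one_neq_zero] by simp
  ultimately show "is_poly_in (c + 1) (delta a b f)"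
    unfolding is_poly_in_def by blast
qed

theorem mainTheorem10:
  fixes f :: "'a::{finite,field} mpoly" and a b c :: nat
  assumes "1 \<le> a" and "a \<le> c + 1"
    and "mvars f \<subseteq> {..<c}"
    and "is_poly_in (c + 1) (delta a b f)"
  shows "\<forall>a'. 1 \<le> a' \<and> a' < a \<longrightarrow> is_poly_in (c + 1) (delta a' b f)"
proof (intro allI impI)
  fix a' assume a': "1 \<le> a' \<and> a' < a"
  have "mooreL a dvd deltaN a b f"
    using assms is_poly_in_delta_iff by blast
  then have "\<forall>(j, c)\<in>moore_index a. delta_residue j c b f = 0"
    by (simp add: mooreL_dvd_deltaN_iff)
  then have "mooreL a' dvd deltaN a' b f"
    using moore_index_mono[of a' a] a' by (auto simp: mooreL_dvd_deltaN_iff)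
  moreover have "a' \<le> c + 1"
    using a' assms(2) by simp
  ultimately show "is_poly_in (c + 1) (delta a' b f)"
    using is_poly_in_delta_iff[OF assms(3)] by blast
qed

end
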